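(* Let $\tau\in(0,\infty]$ and let $\{(\theta_i,\omega_i)\}_{i=1}^N$ be a smooth solution on $[0,\tau)$ of the second-order Kuramoto model with bonding force $$\dot\theta_i=\omega_i,\qquad \dot\omega_i=\frac{1}{N}\sum_{j=1}^N\big[\kappa_0\cos(\theta_j-\theta_i)+\kappa_1\big](\omega_j-\omega_i)+\frac{\kappa_2}{N}\sum_{j=1}^N\big[|\theta_j-\theta_i|-\theta^\infty_{ij}\big]\operatorname{sgn}(\theta_j-\theta_i),\quad i\in[N].$$ Then for all $t\in[0,\tau)$, $$\mathcal{E}(t)+\int_0^t\mathcal{P}(s)\,ds=\mathcal{E}(0),\qquad \mathcal{P}:=\frac{1}{2N}\sum_{i,j=1}^N\big(\kappa_0\cos(\theta_j-\theta_i)+\kappa_1\big)|\omega_j-\omega_i|^2.$$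
   Context: $N\ge 2$, $[N]=\{1,\dots,N\}$, $\kappa_0,\kappa_1,\kappa_2\ge 0$ are constants, $[\theta^\infty_{ij}]$ is a real $N\times N$ matrix with $\theta^\infty_{ii}=0$ and $\theta^\infty_{ij}=\theta^\infty_{ji}$; $\operatorname{sgn}$ is the sign function. The total energy is $\mathcal{E}:=\frac12\sum_{i=1}^N|\omega_i|^2+\frac{\kappa_2}{4N}\sum_{i,j=1}^N\big(|\theta_j-\theta_i|-\theta^\infty_{ij}\big)^2$. *)

theory Defs
  imports "HOL-Analysis.Analysis"
begin

definition kb_energy ::
  "nat \<Rightarrow> real \<Rightarrow> (nat \<Rightarrow> nat \<Rightarrow> real) \<Rightarrow> (nat \<Rightarrow> real \<Rightarrow> real) \<Rightarrow> (nat \<Rightarrow> real \<Rightarrow> real) \<Rightarrow> real \<Rightarrow> real"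
where
  "kb_energy N \<kappa>2 \<theta>inf \<theta> \<omega> t =
     (1/2) * (\<Sum>i\<in>{1..N}. \<bar>\<omega> i t\<bar>^2)
     + \<kappa>2 / (4 * real N) *
       (\<Sum>i\<in>{1..N}. \<Sum>j\<in>{1..N}. (\<bar>\<theta> j t - \<theta> i t\<bar> - \<theta>inf i j)^2)"

definition kb_production ::
  "nat \<Rightarrow> real \<Rightarrow> real \<Rightarrow> (nat \<Rightarrow> real \<Rightarrow> real) \<Rightarrow> (nat \<Rightarrow> real \<Rightarrow> real) \<Rightarrow> real \<Rightarrow> real"
where
  "kb_production N \<kappa>0 \<kappa>1 \<theta> \<omega> t =
     1 / (2 * real N) *
       (\<Sum>i\<in>{1..N}. \<Sum>j\<in>{1..N}.
          (\<kappa>0 * cos (\<theta> j t - \<theta> i t) + \<kappa>1) * \<bar>\<omega> j t - \<omega> i t\<bar>^2)"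

end

theory Submission
  imports Defs
begin

text \<open>Along the flow, the formal time derivative of the energy is
  \<open>\<Sum>\<^sub>i \<omega>\<^sub>i \<omega>\<^sub>i' + \<kappa>\<^sub>2/(2N) \<Sum>\<^sub>i\<^sub>j (|\<theta>\<^sub>j - \<theta>\<^sub>i| - \<theta>\<^sup>\<infinity>\<^sub>i\<^sub>j) sgn(\<theta>\<^sub>j - \<theta>\<^sub>i) (\<omega>\<^sub>j - \<omega>\<^sub>i)\<close>.
  Symmetrising the double sums, the alignment term of \<open>\<omega>\<^sub>i'\<close> yields \<open>-\<P>\<close> because its
  weights are symmetric, and the bonding term cancels against the potential part because
  \<open>(|\<theta>\<^sub>j - \<theta>\<^sub>i| - \<theta>\<^sup>\<infinity>\<^sub>i\<^sub>j) sgn(\<theta>\<^sub>j - \<theta>\<^sub>i)\<close> is antisymmetric in \<open>i, j\<close>.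
  The energy need not be differentiable where two phases cross, so the chain rule for
  \<open>|f|\<close> is established in integral form only, by smoothing \<open>|y|\<close> to \<open>sqrt (y\<^sup>2 + d\<^sup>2)\<close>
  and letting \<open>d \<rightarrow> 0\<close> under dominated convergence.\<close>

lemma has_integral_sgn_mult_derivative:
  fixes f f' :: "real \<Rightarrow> real"
  assumes "a \<le> b"
    and f: "\<And>s. s \<in> {a..b} \<Longrightarrow> (f has_real_derivative f' s) (at s within {a..b})"
    and "continuous_on {a..b} f'"
  shows "((\<lambda>s. sgn (f s) * f' s) has_integral (\<bar>f b\<bar> - \<bar>f a\<bar>)) {a..b}"
proof -
  define d :: "nat \<Rightarrow> real" where "d k = 1 / Suc k" for k
  define g where "g k s = sqrt ((f s)\<^sup>2 + (d k)\<^sup>2)" for k s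
  have d_to_0: "d \<longlonglongrightarrow> 0"
    unfolding d_def by (rule LIMSEQ_Suc[OF lim_const_over_n])
  have g_pos: "0 < g k s" for k s
    unfolding g_def d_def by (simp add: add_nonneg_pos)
  have abs_le_g: "\<bar>f s\<bar> \<le> g k s" for k s
    unfolding g_def by (metis real_sqrt_abs real_sqrt_le_mono le_add_same_cancel1 zero_le_power2)
  have g_deriv: "((g k) has_real_derivative f s / g k s * f' s) (at s within {a..b})"
    if "s \<in> {a..b}" for k s
  proof -
    have "((\<lambda>s. (f s)\<^sup>2 + (d k)\<^sup>2) has_real_derivative 2 * f s * f' s) (at s within {a..b})"
      using f[OF that] by (auto intro!: derivative_eq_intros)
    from DERIV_chain2[OF DERIV_real_sqrt this] g_pos[of k s] show ?thesis
      unfolding g_def by (simp add: field_simps)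
  qed
  have ftc: "((\<lambda>s. f s / g k s * f' s) has_integral (g k b - g k a)) {a..b}" for k
    by (rule fundamental_theorem_of_calculus[OF \<open>a \<le> b\<close>])
      (metis g_deriv has_real_derivative_iff_has_vector_derivative)
  have g_to_abs: "(\<lambda>k. g k s) \<longlonglongrightarrow> \<bar>f s\<bar>" for s
  proof -
    have "(\<lambda>k. g k s) \<longlonglongrightarrow> sqrt ((f s)\<^sup>2 + 0\<^sup>2)"
      unfolding g_def by (intro tendsto_intros d_to_0)
    then show ?thesis by simp
  qed
  have quotient_to_sgn: "(\<lambda>k. f s / g k s) \<longlonglongrightarrow> sgn (f s)" for s
  proof (cases "f s = 0")
    case False
    then have "(\<lambda>k. f s / g k s) \<longlonglongrightarrow> f s / \<bar>f s\<bar>"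
      by (intro tendsto_intros g_to_abs) simp
    then show ?thesis by (simp add: real_sgn_eq)
  qed simp
  show ?thesis
  proof (rule has_integral_dominated_convergence[OF ftc])
    show "(\<lambda>s. \<bar>f' s\<bar>) integrable_on {a..b}"
      by (intro integrable_continuous_interval continuous_intros assms(3))
    have "\<bar>f s / g k s\<bar> \<le> 1" for k s
      using abs_le_g[of s k] g_pos[of k s] by (simp add: abs_divide)
    then show "\<forall>s\<in>{a..b}. norm (f s / g k s * f' s) \<le> \<bar>f' s\<bar>" for k
      by (metis abs_ge_zero abs_mult mult_left_le_one_le real_norm_def)
    show "\<forall>s\<in>{a..b}. (\<lambda>k. f s / g k s * f' s) \<longlonglongrightarrow> sgn (f s) * f' s"
      by (intro ballI tendsto_intros quotient_to_sgn)
    show "(\<lambda>k. g k b - g k a) \<longlonglongrightarrow> \<bar>f b\<bar> - \<bar>f a\<bar>"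
      by (intro tendsto_intros g_to_abs)
  qed
qed

lemma has_integral_abs_minus_const_squared:
  fixes f f' :: "real \<Rightarrow> real"
  assumes "a \<le> b"
    and f: "\<And>s. s \<in> {a..b} \<Longrightarrow> (f has_real_derivative f' s) (at s within {a..b})"
    and "continuous_on {a..b} f'"
  shows "((\<lambda>s. (\<bar>f s\<bar> - c) * sgn (f s) * f' s) has_integral
           ((\<bar>f b\<bar> - c)\<^sup>2 - (\<bar>f a\<bar> - c)\<^sup>2) / 2) {a..b}"
proof -
  have "((\<lambda>s. f s * f' s) has_integral (f b)\<^sup>2 / 2 - (f a)\<^sup>2 / 2) {a..b}"
    using f
    by (intro fundamental_theorem_of_calculus[OF \<open>a \<le> b\<close>, of "\<lambda>s. (f s)\<^sup>2 / 2"])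
      (auto intro!: derivative_eq_intros simp flip: has_real_derivative_iff_has_vector_derivative)
  moreover have "((\<lambda>s. c * (sgn (f s) * f' s)) has_integral c * (\<bar>f b\<bar> - \<bar>f a\<bar>)) {a..b}"
    by (intro has_integral_mult_right has_integral_sgn_mult_derivative assms)
  ultimately have "((\<lambda>s. f s * f' s - c * (sgn (f s) * f' s)) has_integral
      (f b)\<^sup>2 / 2 - (f a)\<^sup>2 / 2 - c * (\<bar>f b\<bar> - \<bar>f a\<bar>)) {a..b}"
    by (rule has_integral_diff)
  moreover have "(\<lambda>s. f s * f' s - c * (sgn (f s) * f' s)) = (\<lambda>s. (\<bar>f s\<bar> - c) * sgn (f s) * f' s)"
    by (simp add: fun_eq_iff algebra_simps abs_mult_sgn)
  moreover have "(f b)\<^sup>2 / 2 - (f a)\<^sup>2 / 2 - c * (\<bar>f b\<bar> - \<bar>f a\<bar>)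
      = ((\<bar>f b\<bar> - c)\<^sup>2 - (\<bar>f a\<bar> - c)\<^sup>2) / 2"
    by (simp add: power2_eq_square field_simps)
  ultimately show ?thesis
    by simp
qed

lemma sum_sum_mult_diff_symmetric:
  fixes a :: "'i \<Rightarrow> 'i \<Rightarrow> 'a::field_char_0" and w :: "'i \<Rightarrow> 'a"
  assumes "\<And>i j. i \<in> I \<Longrightarrow> j \<in> I \<Longrightarrow> a i j = a j i"
  shows "(\<Sum>i\<in>I. \<Sum>j\<in>I. w i * (a i j * (w j - w i)))
           = - (1/2) * (\<Sum>i\<in>I. \<Sum>j\<in>I. a i j * (w j - w i)\<^sup>2)"
proof -
  let ?L = "\<Sum>i\<in>I. \<Sum>j\<in>I. w i * (a i j * (w j - w i))"
  have "?L = (\<Sum>i\<in>I. \<Sum>j\<in>I. w j * (a i j * (w i - w j)))"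
    by (subst sum.swap) (intro sum.cong refl, simp add: assms)
  then have "?L + ?L = (\<Sum>i\<in>I. \<Sum>j\<in>I. w i * (a i j * (w j - w i)) + w j * (a i j * (w i - w j)))"
    by (simp add: sum.distrib)
  also have "\<dots> = (\<Sum>i\<in>I. \<Sum>j\<in>I. - (a i j * (w j - w i)\<^sup>2))"
    by (intro sum.cong refl) (simp add: power2_eq_square algebra_simps)
  also have "\<dots> = - (\<Sum>i\<in>I. \<Sum>j\<in>I. a i j * (w j - w i)\<^sup>2)"
    by (simp add: sum_negf)
  finally show ?thesis
    by (simp add: field_simps)
qed

lemma sum_sum_antisymmetric_mult_diff:
  fixes b :: "'i \<Rightarrow> 'i \<Rightarrow> 'a::comm_ring_1" and w :: "'i \<Rightarrow> 'a"
  assumes "\<And>i j. i \<in> I \<Longrightarrow> j \<in> I \<Longrightarrow> b i j = - b j i"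
  shows "(\<Sum>i\<in>I. \<Sum>j\<in>I. b i j * (w j - w i)) = - 2 * (\<Sum>i\<in>I. w i * (\<Sum>j\<in>I. b i j))"
proof -
  have "(\<Sum>i\<in>I. \<Sum>j\<in>I. b i j * w j) = (\<Sum>i\<in>I. \<Sum>j\<in>I. - (b i j * w i))"
    by (subst sum.swap) (intro sum.cong refl, metis assms mult_minus_left)
  then have "(\<Sum>i\<in>I. \<Sum>j\<in>I. b i j * (w j - w i)) = - 2 * (\<Sum>i\<in>I. \<Sum>j\<in>I. b i j * w i)"
    by (simp add: right_diff_distrib sum_subtractf sum_negf)
  then show ?thesis
    by (simp add: sum_distrib_left mult.commute)
qed

definition kb_force ::
  "nat \<Rightarrow> real \<Rightarrow> real \<Rightarrow> real \<Rightarrow> (nat \<Rightarrow> nat \<Rightarrow> real) \<Rightarrow>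
     (nat \<Rightarrow> real \<Rightarrow> real) \<Rightarrow> (nat \<Rightarrow> real \<Rightarrow> real) \<Rightarrow> nat \<Rightarrow> real \<Rightarrow> real"
where
  "kb_force N \<kappa>0 \<kappa>1 \<kappa>2 \<theta>inf \<theta> \<omega> i t =
     (1 / real N) * (\<Sum>j\<in>{1..N}. (\<kappa>0 * cos (\<theta> j t - \<theta> i t) + \<kappa>1) * (\<omega> j t - \<omega> i t))
     + \<kappa>2 / real N * (\<Sum>j\<in>{1..N}. (\<bar>\<theta> j t - \<theta> i t\<bar> - \<theta>inf i j) * sgn (\<theta> j t - \<theta> i t))"

definition kb_energy_rate ::
  "nat \<Rightarrow> real \<Rightarrow> real \<Rightarrow> real \<Rightarrow> (nat \<Rightarrow> nat \<Rightarrow> real) \<Rightarrow>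
     (nat \<Rightarrow> real \<Rightarrow> real) \<Rightarrow> (nat \<Rightarrow> real \<Rightarrow> real) \<Rightarrow> real \<Rightarrow> real"
where
  "kb_energy_rate N \<kappa>0 \<kappa>1 \<kappa>2 \<theta>inf \<theta> \<omega> t =
     (\<Sum>i\<in>{1..N}. \<omega> i t * kb_force N \<kappa>0 \<kappa>1 \<kappa>2 \<theta>inf \<theta> \<omega> i t)
     + \<kappa>2 / (2 * real N) * (\<Sum>i\<in>{1..N}. \<Sum>j\<in>{1..N}.
         (\<bar>\<theta> j t - \<theta> i t\<bar> - \<theta>inf i j) * sgn (\<theta> j t - \<theta> i t) * (\<omega> j t - \<omega> i t))"

lemma kb_energy_rate_eq_neg_production:
  assumes "\<And>i j. i \<in> {1..N} \<Longrightarrow> j \<in> {1..N} \<Longrightarrow> \<theta>inf i j = \<theta>inf j i"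
  shows "kb_energy_rate N \<kappa>0 \<kappa>1 \<kappa>2 \<theta>inf \<theta> \<omega> t = - kb_production N \<kappa>0 \<kappa>1 \<theta> \<omega> t"
proof -
  define I where "I = {1..N}"
  define a where "a i j = \<kappa>0 * cos (\<theta> j t - \<theta> i t) + \<kappa>1" for i j
  define b where "b i j = (\<bar>\<theta> j t - \<theta> i t\<bar> - \<theta>inf i j) * sgn (\<theta> j t - \<theta> i t)" for i j
  have "a i j = a j i" for i j
    unfolding a_def by (metis cos_minus minus_diff_eq)
  then have alignment:
    "(\<Sum>i\<in>I. \<Sum>j\<in>I. \<omega> i t * (a i j * (\<omega> j t - \<omega> i t)))
       = - (1/2) * (\<Sum>i\<in>I. \<Sum>j\<in>I. a i j * (\<omega> j t - \<omega> i t)\<^sup>2)"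
    by (rule sum_sum_mult_diff_symmetric)
  have "b i j = - b j i" if "i \<in> I" "j \<in> I" for i j
    using assms[of i j] that unfolding b_def I_def
    by (simp add: abs_minus_commute sgn_minus[of "\<theta> i t - \<theta> j t", simplified])
  then have bonding:
    "(\<Sum>i\<in>I. \<Sum>j\<in>I. b i j * (\<omega> j t - \<omega> i t)) = - 2 * (\<Sum>i\<in>I. \<omega> i t * (\<Sum>j\<in>I. b i j))"
    by (rule sum_sum_antisymmetric_mult_diff)
  have "kb_energy_rate N \<kappa>0 \<kappa>1 \<kappa>2 \<theta>inf \<theta> \<omega> t
      = 1 / real N * (\<Sum>i\<in>I. \<Sum>j\<in>I. \<omega> i t * (a i j * (\<omega> j t - \<omega> i t)))
        + \<kappa>2 / real N * (\<Sum>i\<in>I. \<omega> i t * (\<Sum>j\<in>I. b i j))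
        + \<kappa>2 / (2 * real N) * (\<Sum>i\<in>I. \<Sum>j\<in>I. b i j * (\<omega> j t - \<omega> i t))"
    unfolding kb_energy_rate_def kb_force_def a_def b_def I_def
    by (simp add: sum_distrib_left sum.distrib algebra_simps)
  also have "\<dots> = - kb_production N \<kappa>0 \<kappa>1 \<theta> \<omega> t"
    unfolding alignment bonding by (simp add: kb_production_def a_def I_def algebra_simps)
  finally show ?thesis .
qed

lemma kb_energy_rate_has_integral:
  assumes "a \<le> b"
    and \<theta>: "\<And>i s. i \<in> {1..N} \<Longrightarrow> s \<in> {a..b} \<Longrightarrow>
        (\<theta> i has_real_derivative \<omega> i s) (at s within {a..b})"
    and \<omega>: "\<And>i s. i \<in> {1..N} \<Longrightarrow> s \<in> {a..b} \<Longrightarrow>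
        (\<omega> i has_real_derivative kb_force N \<kappa>0 \<kappa>1 \<kappa>2 \<theta>inf \<theta> \<omega> i s) (at s within {a..b})"
  shows "(kb_energy_rate N \<kappa>0 \<kappa>1 \<kappa>2 \<theta>inf \<theta> \<omega> has_integral
           kb_energy N \<kappa>2 \<theta>inf \<theta> \<omega> b - kb_energy N \<kappa>2 \<theta>inf \<theta> \<omega> a) {a..b}"
proof -
  let ?F = "kb_force N \<kappa>0 \<kappa>1 \<kappa>2 \<theta>inf \<theta> \<omega>"
  have kinetic: "((\<lambda>s. \<omega> i s * ?F i s) has_integral (\<omega> i b)\<^sup>2 / 2 - (\<omega> i a)\<^sup>2 / 2) {a..b}"
    if "i \<in> {1..N}" for i
    using \<omega>[OF that]
    by (intro fundamental_theorem_of_calculus[OF \<open>a \<le> b\<close>, of "\<lambda>s. (\<omega> i s)\<^sup>2 / 2"])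
      (auto intro!: derivative_eq_intros simp flip: has_real_derivative_iff_has_vector_derivative)
  have potential: "((\<lambda>s. (\<bar>\<theta> j s - \<theta> i s\<bar> - \<theta>inf i j) * sgn (\<theta> j s - \<theta> i s) * (\<omega> j s - \<omega> i s))
      has_integral ((\<bar>\<theta> j b - \<theta> i b\<bar> - \<theta>inf i j)\<^sup>2 - (\<bar>\<theta> j a - \<theta> i a\<bar> - \<theta>inf i j)\<^sup>2) / 2) {a..b}"
    if "i \<in> {1..N}" "j \<in> {1..N}" for i j
  proof (rule has_integral_abs_minus_const_squared[OF \<open>a \<le> b\<close>])
    show "((\<lambda>s. \<theta> j s - \<theta> i s) has_real_derivative \<omega> j s - \<omega> i s) (at s within {a..b})"
      if "s \<in> {a..b}" for s
      using \<theta> \<open>i \<in> {1..N}\<close> \<open>j \<in> {1..N}\<close> \<open>s \<in> {a..b}\<close> by (intro DERIV_diff)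
    show "continuous_on {a..b} (\<lambda>s. \<omega> j s - \<omega> i s)"
      using \<omega> that by (intro continuous_on_diff DERIV_continuous_on)
  qed
  have "(kb_energy_rate N \<kappa>0 \<kappa>1 \<kappa>2 \<theta>inf \<theta> \<omega> has_integral
      (\<Sum>i\<in>{1..N}. (\<omega> i b)\<^sup>2 / 2 - (\<omega> i a)\<^sup>2 / 2)
      + \<kappa>2 / (2 * real N) * (\<Sum>i\<in>{1..N}. \<Sum>j\<in>{1..N}.
          ((\<bar>\<theta> j b - \<theta> i b\<bar> - \<theta>inf i j)\<^sup>2 - (\<bar>\<theta> j a - \<theta> i a\<bar> - \<theta>inf i j)\<^sup>2) / 2)) {a..b}"
    unfolding kb_energy_rate_def[abs_def]
    by (intro has_integral_add has_integral_mult_right has_integral_sum finite_atLeastAtMost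
        kinetic potential)
  then show ?thesis
    by (simp add: kb_energy_def sum_subtractf sum_divide_distrib[symmetric] algebra_simps
        divide_divide_eq_left diff_divide_distrib)
qed

theorem proposition2p2:
  fixes N :: nat and \<kappa>0 \<kappa>1 \<kappa>2 :: real and \<theta>inf :: "nat \<Rightarrow> nat \<Rightarrow> real"
    and \<tau> :: ereal and \<theta> \<omega> :: "nat \<Rightarrow> real \<Rightarrow> real"
  assumes hN: "N \<ge> 2"
    and hk0: "\<kappa>0 \<ge> 0" and hk1: "\<kappa>1 \<ge> 0" and hk2: "\<kappa>2 \<ge> 0"
    and hdiag: "\<And>i. i \<in> {1..N} \<Longrightarrow> \<theta>inf i i = 0"
    and hsym: "\<And>i j. i \<in> {1..N} \<Longrightarrow> j \<in> {1..N} \<Longrightarrow> \<theta>inf i j = \<theta>inf j i"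
    and h\<tau>: "\<tau> > 0"
    and hth: "\<And>i t. i \<in> {1..N} \<Longrightarrow> 0 \<le> t \<Longrightarrow> ereal t < \<tau> \<Longrightarrow>
        (\<theta> i has_real_derivative \<omega> i t) (at t within {s. 0 \<le> s \<and> ereal s < \<tau>})"
    and hom: "\<And>i t. i \<in> {1..N} \<Longrightarrow> 0 \<le> t \<Longrightarrow> ereal t < \<tau> \<Longrightarrow>
        (\<omega> i has_real_derivative
           (1 / real N) * (\<Sum>j\<in>{1..N}. (\<kappa>0 * cos (\<theta> j t - \<theta> i t) + \<kappa>1) * (\<omega> j t - \<omega> i t))
         + \<kappa>2 / real N * (\<Sum>j\<in>{1..N}. (\<bar>\<theta> j t - \<theta> i t\<bar> - \<theta>inf i j) * sgn (\<theta> j t - \<theta> i t)))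
        (at t within {s. 0 \<le> s \<and> ereal s < \<tau>})"
  shows "\<forall>t. 0 \<le> t \<and> ereal t < \<tau> \<longrightarrow>
           kb_energy N \<kappa>2 \<theta>inf \<theta> \<omega> t + integral {0..t} (kb_production N \<kappa>0 \<kappa>1 \<theta> \<omega>)
             = kb_energy N \<kappa>2 \<theta>inf \<theta> \<omega> 0"
proof (intro allI impI)
  fix t assume t: "0 \<le> t \<and> ereal t < \<tau>"
  have sub: "{0..t} \<subseteq> {s. 0 \<le> s \<and> ereal s < \<tau>}"
    using t by (auto intro: le_less_trans[of _ "ereal t"])
  then have in_dom: "0 \<le> s" "ereal s < \<tau>" if "s \<in> {0..t}" for s
    using that by blast+
  have "(kb_energy_rate N \<kappa>0 \<kappa>1 \<kappa>2 \<theta>inf \<theta> \<omega> has_integral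
      kb_energy N \<kappa>2 \<theta>inf \<theta> \<omega> t - kb_energy N \<kappa>2 \<theta>inf \<theta> \<omega> 0) {0..t}"
    (is "(_ has_integral ?\<Delta>E) _")
  proof (rule kb_energy_rate_has_integral)
    show "0 \<le> t" using t by simp
    show "(\<theta> i has_real_derivative \<omega> i s) (at s within {0..t})"
      if "i \<in> {1..N}" "s \<in> {0..t}" for i s
      using in_dom[OF that(2)] by (intro DERIV_subset[OF hth[OF that(1)] sub])
    show "(\<omega> i has_real_derivative kb_force N \<kappa>0 \<kappa>1 \<kappa>2 \<theta>inf \<theta> \<omega> i s) (at s within {0..t})"
      if "i \<in> {1..N}" "s \<in> {0..t}" for i s
      using in_dom[OF that(2)] unfolding kb_force_def by (intro DERIV_subset[OF hom[OF that(1)] sub])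
  qed
  then have "((\<lambda>s. - kb_energy_rate N \<kappa>0 \<kappa>1 \<kappa>2 \<theta>inf \<theta> \<omega> s) has_integral - ?\<Delta>E) {0..t}"
    by (rule has_integral_neg)
  moreover have "kb_energy_rate N \<kappa>0 \<kappa>1 \<kappa>2 \<theta>inf \<theta> \<omega> s = - kb_production N \<kappa>0 \<kappa>1 \<theta> \<omega> s" for s
    using hsym by (rule kb_energy_rate_eq_neg_production)
  ultimately have "(kb_production N \<kappa>0 \<kappa>1 \<theta> \<omega> has_integral - ?\<Delta>E) {0..t}"
    by simp
  then show "kb_energy N \<kappa>2 \<theta>inf \<theta> \<omega> t + integral {0..t} (kb_production N \<kappa>0 \<kappa>1 \<theta> \<omega>)
      = kb_energy N \<kappa>2 \<theta>inf \<theta> \<omega> 0"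
    by (simp add: integral_unique)
qed

end
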